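(* Let $G$ be a graph, $k$ a positive integer, and $V_1,\dots,V_t$ a partition of $V(G)$ into types as described in the context. If the integer program $\mathrm{ILP}(G,k,V_1,\dots,V_t)$ described in the context has a feasible assignment, then $G$ has a star coloring using at most $k$ colors.
   Context: All graphs are finite, simple, undirected and connected. A star coloring of $G$ with at most $k$ colors is a map $f:V(G)\to\{1,\dots,k\}$ with $f(u)\neq f(v)$ for every edge $uv$ such that every path on four vertices (not necessarily induced) receives at least three distinct colors. Two vertices $u,v$ have the same type if $N(u)\setminus\{v\}=N(v)\setminus\{u\}$; $V_1,\dots,V_t$ is a partition of $V(G)$ into nonempty sets in each of which all vertices pairwise have the same type. Then each $G[V_i]$ is a clique or an independent set; $V_i$ is called a clique type if $G[V_i]$ is complete and an independent type if $G[V_i]$ has no edges. For $i\neq j$, either every vertex of $V_i$ is adjacent to every vertex of $V_j$ (write $V_j\in adj(V_i)$) or there are no edges between them. For $A\subseteq[t]$ let $T_A=\{V_i: i\in A\}$. The program $\mathrm{ILP}(G,k,V_1,\dots,V_t)$ has one integer variable $n_A$ for every $A\subseteq[t]$ and the following constraints: (C0) $n_A=0$ (the variable is discarded) whenever $T_A$ contains two types $V_i,V_j$ with $V_j\in adj(V_i)$; (C1) $\sum_{A\subseteq[t]} n_A\le k$; (C2) for each clique type $V_i$: $\sum_{A: V_i\in T_A} n_A=|V_i|$; (C3) for each independent type $V_i$: $1\le \sum_{A:V_i\in T_A} n_A\le \min\{k,|V_i|\}$; (C4) for every four distinct types $V_{i_1},V_{i_2},V_{i_3},V_{i_4}$ with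 $V_{i_1},V_{i_3}\in adj(V_{i_2})$ and $V_{i_4}\in adj(V_{i_3})$: if $\sum_{A: V_{i_1},V_{i_3}\in T_A} n_A\ge 1$ then $\sum_{B: V_{i_2},V_{i_4}\in T_B} n_B=0$; (C5) for every three distinct types $V_{i_1},V_{i_2},V_{i_3}$ with $V_{i_1}$ an independent type and $V_{i_2},V_{i_3}\in adj(V_{i_1})$: if $\sum_{A:V_{i_1}\in T_A} n_A<|V_{i_1}|$ then $\sum_{B: V_{i_2},V_{i_3}\in T_B} n_B=0$; (C6) for every two distinct independent types $V_{i_1},V_{i_2}$ with $V_{i_1}\in adj(V_{i_2})$: if $\sum_{A:V_{i_1}\in T_A} n_A<|V_{i_1}|$ then $\sum_{B:V_{i_2}\in T_B} n_B=|V_{i_2}|$, and symmetrically with $i_1,i_2$ swapped; (C7) $n_A\ge 0$ for all $A\subseteq[t]$. A feasible assignment is an assignment of integer values to all $n_A$ satisfying (C0)–(C7). *)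

theory Defs
  imports Main
begin

definition is_graph :: "'a set \<Rightarrow> ('a \<Rightarrow> 'a \<Rightarrow> bool) \<Rightarrow> bool" where
  "is_graph V E \<longleftrightarrow> finite V \<and> V \<noteq> {} \<and>
     (\<forall>u v. E u v \<longrightarrow> u \<in> V \<and> v \<in> V) \<and>
     (\<forall>u v. E u v \<longrightarrow> E v u) \<and> (\<forall>u. \<not> E u u) \<and>
     (\<forall>u\<in>V. \<forall>v\<in>V. E\<^sup>*\<^sup>* u v)"

definition nbhd :: "('a \<Rightarrow> 'a \<Rightarrow> bool) \<Rightarrow> 'a \<Rightarrow> 'a set" where
  "nbhd E u = {w. E u w}"

definition same_type :: "('a \<Rightarrow> 'a \<Rightarrow> bool) \<Rightarrow> 'a \<Rightarrow> 'a \<Rightarrow> bool" where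
  "same_type E u v \<longleftrightarrow> nbhd E u - {v} = nbhd E v - {u}"

definition type_partition ::
  "'a set \<Rightarrow> ('a \<Rightarrow> 'a \<Rightarrow> bool) \<Rightarrow> nat \<Rightarrow> (nat \<Rightarrow> 'a set) \<Rightarrow> bool" where
  "type_partition V E t P \<longleftrightarrow>
     (\<forall>i\<in>{1..t}. P i \<noteq> {} \<and> P i \<subseteq> V) \<and>
     (\<forall>i\<in>{1..t}. \<forall>j\<in>{1..t}. i \<noteq> j \<longrightarrow> P i \<inter> P j = {}) \<and>
     (\<Union>i\<in>{1..t}. P i) = V \<and>
     (\<forall>i\<in>{1..t}. \<forall>u\<in>P i. \<forall>v\<in>P i. same_type E u v)"

definition clique_type :: "('a \<Rightarrow> 'a \<Rightarrow> bool) \<Rightarrow> (nat \<Rightarrow> 'a set) \<Rightarrow> nat \<Rightarrow> bool" where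
  "clique_type E P i \<longleftrightarrow> (\<forall>u\<in>P i. \<forall>v\<in>P i. u \<noteq> v \<longrightarrow> E u v)"

definition indep_type :: "('a \<Rightarrow> 'a \<Rightarrow> bool) \<Rightarrow> (nat \<Rightarrow> 'a set) \<Rightarrow> nat \<Rightarrow> bool" where
  "indep_type E P i \<longleftrightarrow> (\<forall>u\<in>P i. \<forall>v\<in>P i. \<not> E u v)"

definition adjT :: "('a \<Rightarrow> 'a \<Rightarrow> bool) \<Rightarrow> (nat \<Rightarrow> 'a set) \<Rightarrow> nat \<Rightarrow> nat \<Rightarrow> bool" where
  "adjT E P i j \<longleftrightarrow> i \<noteq> j \<and> (\<forall>u\<in>P i. \<forall>v\<in>P j. E u v)"

definition sumC :: "nat \<Rightarrow> (nat set \<Rightarrow> int) \<Rightarrow> nat set \<Rightarrow> int" where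
  "sumC t n S = (\<Sum>A\<in>{A. A \<subseteq> {1..t} \<and> S \<subseteq> A}. n A)"

definition ILP_feasible ::
  "'a set \<Rightarrow> ('a \<Rightarrow> 'a \<Rightarrow> bool) \<Rightarrow> nat \<Rightarrow> nat \<Rightarrow> (nat \<Rightarrow> 'a set) \<Rightarrow> (nat set \<Rightarrow> int) \<Rightarrow> bool" where
  "ILP_feasible V E k t P n \<longleftrightarrow>
    \<comment> \<open>C0\<close>
    (\<forall>A. A \<subseteq> {1..t} \<longrightarrow> (\<exists>i\<in>A. \<exists>j\<in>A. adjT E P i j) \<longrightarrow> n A = 0) \<and>
    \<comment> \<open>C1\<close>
    (\<Sum>A\<in>Pow {1..t}. n A) \<le> int k \<and>
    \<comment> \<open>C2\<close>
    (\<forall>i\<in>{1..t}. clique_type E P i \<longrightarrow> sumC t n {i} = int (card (P i))) \<and>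
    \<comment> \<open>C3\<close>
    (\<forall>i\<in>{1..t}. indep_type E P i \<longrightarrow>
        1 \<le> sumC t n {i} \<and> sumC t n {i} \<le> int (min k (card (P i)))) \<and>
    \<comment> \<open>C4\<close>
    (\<forall>i1\<in>{1..t}. \<forall>i2\<in>{1..t}. \<forall>i3\<in>{1..t}. \<forall>i4\<in>{1..t}.
        distinct [i1, i2, i3, i4] \<longrightarrow>
        adjT E P i2 i1 \<longrightarrow> adjT E P i2 i3 \<longrightarrow> adjT E P i3 i4 \<longrightarrow>
        sumC t n {i1, i3} \<ge> 1 \<longrightarrow> sumC t n {i2, i4} = 0) \<and>
    \<comment> \<open>C5\<close>
    (\<forall>i1\<in>{1..t}. \<forall>i2\<in>{1..t}. \<forall>i3\<in>{1..t}.
        distinct [i1, i2, i3] \<longrightarrow> indep_type E P i1 \<longrightarrow>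
        adjT E P i1 i2 \<longrightarrow> adjT E P i1 i3 \<longrightarrow>
        sumC t n {i1} < int (card (P i1)) \<longrightarrow> sumC t n {i2, i3} = 0) \<and>
    \<comment> \<open>C6 (the symmetric case is covered by quantifying over both orders)\<close>
    (\<forall>i1\<in>{1..t}. \<forall>i2\<in>{1..t}.
        i1 \<noteq> i2 \<longrightarrow> indep_type E P i1 \<longrightarrow> indep_type E P i2 \<longrightarrow>
        adjT E P i2 i1 \<longrightarrow>
        sumC t n {i1} < int (card (P i1)) \<longrightarrow> sumC t n {i2} = int (card (P i2))) \<and>
    \<comment> \<open>C7\<close>
    (\<forall>A. A \<subseteq> {1..t} \<longrightarrow> n A \<ge> 0)"

definition star_coloring ::
  "'a set \<Rightarrow> ('a \<Rightarrow> 'a \<Rightarrow> bool) \<Rightarrow> nat \<Rightarrow> ('a \<Rightarrow> nat) \<Rightarrow> bool" where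
  "star_coloring V E k f \<longleftrightarrow>
     (\<forall>v\<in>V. f v \<in> {1..k}) \<and>
     (\<forall>u v. E u v \<longrightarrow> f u \<noteq> f v) \<and>
     (\<forall>a b c d. distinct [a, b, c, d] \<longrightarrow> E a b \<longrightarrow> E b c \<longrightarrow> E c d \<longrightarrow>
        card {f a, f b, f c, f d} \<ge> 3)"

end

theory Submission
  imports Defs
begin

text \<open>A feasible assignment prescribes a palette: for every A with \<open>n A > 0\<close> there are
  \<open>n A\<close> colours, each reserved for the types in A, so by (C1) at most k colours in total. Type
  \<open>V\<^sub>i\<close> has \<open>sumC t n {i}\<close> colours at its disposal, between 1 and \<open>|V\<^sub>i|\<close> by (C2) and (C3);
  we map \<open>V\<^sub>i\<close> onto them, injectively whenever there are enough. Two vertices then share a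
  colour only if their types lie in a common A with \<open>n A > 0\<close>, which by (C0) are non-adjacent
  types, and two vertices of the same type share a colour only if that type is short of colours.
  Hence the colouring is proper (clique types are never short by (C2)), and a bicoloured path
  a b c d is excluded by (C4), (C5) or (C6), according to whether neither, one or both of the pairs
  a, c and b, d are of equal type.\<close>

lemma card_ge_3_unless_alternating:
  assumes "x1 \<noteq> x2" "x2 \<noteq> x3" "x3 \<noteq> x4" "\<not> (x1 = x3 \<and> x2 = x4)"
  shows "3 \<le> card {x1, x2, x3, x4}"
  using assms by (cases "x1 = x3") (auto simp: card_insert_if)

lemma ex_onto_if_card_le:
  assumes "finite Y" "Y \<noteq> {}" "card Y \<le> card X"
  shows "\<exists>g. g ` X = Y"
proof -
  have "finite X" using assms card_ge_0_finite by fastforce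
  then obtain h where h: "inj_on h Y" "h ` Y \<subseteq> X"
    using card_le_inj assms by metis
  obtain y0 where "y0 \<in> Y" using assms(2) by blast
  define g where "g x = (if x \<in> h ` Y then inv_into Y h x else y0)" for x
  have "g ` X = Y"
  proof
    show "g ` X \<subseteq> Y" using \<open>y0 \<in> Y\<close> by (auto simp: g_def inv_into_into)
    show "Y \<subseteq> g ` X"
    proof
      fix y assume "y \<in> Y"
      then have "g (h y) = y" using h(1) by (simp add: g_def)
      then show "y \<in> g ` X" using h(2) \<open>y \<in> Y\<close> by force
    qed
  qed
  then show ?thesis by blast
qed

lemma star_coloring_from_palette:
  assumes graph: "is_graph V E"
    and palette: "finite C" "card C \<le> k" "g ` V \<subseteq> C"
    and proper: "\<And>u v. E u v \<Longrightarrow> g u \<noteq> g v"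
    and no_bicoloured_P4: "\<And>a b c d. distinct [a, b, c, d] \<Longrightarrow> E a b \<Longrightarrow> E b c \<Longrightarrow> E c d \<Longrightarrow>
      g a = g c \<Longrightarrow> g b = g d \<Longrightarrow> False"
  shows "\<exists>f. star_coloring V E k f"
proof -
  have edge_in_V: "u \<in> V \<and> v \<in> V" if "E u v" for u v
    using graph that unfolding is_graph_def by blast
  obtain enc where enc: "bij_betw enc C {0..<card C}"
    using ex_bij_betw_finite_nat[OF palette(1)] by blast
  define f where "f v = Suc (enc (g v))" for v
  have f_range: "f v \<in> {1..k}" if "v \<in> V" for v
  proof -
    have "enc (g v) < card C" using that palette(3) bij_betw_apply[OF enc] by auto
    then show ?thesis using palette(2) unfolding f_def by simp
  qed
  have f_eq_iff: "f u = f v \<longleftrightarrow> g u = g v" if "u \<in> V" "v \<in> V" for u v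
  proof -
    have "g u \<in> C" "g v \<in> C" using that palette(3) by blast+
    then show ?thesis using inj_on_eq_iff[OF bij_betw_imp_inj_on[OF enc]] unfolding f_def by simp
  qed
  have "star_coloring V E k f"
    unfolding star_coloring_def
  proof (intro conjI allI impI ballI)
    show "f v \<in> {1..k}" if "v \<in> V" for v using f_range that .
    show "f u \<noteq> f v" if "E u v" for u v
      using edge_in_V[OF that] proper[OF that] f_eq_iff by simp
    fix a b c d
    assume path: "distinct [a, b, c, d]" "E a b" "E b c" "E c d"
    then have "a \<in> V" "b \<in> V" "c \<in> V" "d \<in> V" using edge_in_V by blast+
    then have "f a \<noteq> f b" "f b \<noteq> f c" "f c \<noteq> f d" "\<not> (f a = f c \<and> f b = f d)"
      using proper path(2-4) no_bicoloured_P4[OF path] f_eq_iff by auto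
    then show "3 \<le> card {f a, f b, f c, f d}"
      by (rule card_ge_3_unless_alternating)
  qed
  then show ?thesis by blast
qed

lemma same_type_edge:
  assumes "same_type E u v" "E u w" "w \<noteq> v" "\<not> E u u"
  shows "E v w"
proof -
  have "w \<in> nbhd E u - {v}" using assms by (simp add: nbhd_def)
  then have "w \<in> nbhd E v - {u}" using assms(1) unfolding same_type_def by blast
  then show ?thesis by (simp add: nbhd_def)
qed

locale type_partitioned_graph =
  fixes V :: "'a set" and E :: "'a \<Rightarrow> 'a \<Rightarrow> bool" and t :: nat and P :: "nat \<Rightarrow> 'a set"
  assumes graph: "is_graph V E"
    and partition: "type_partition V E t P"
begin

lemma edge_in_V: "E u v \<Longrightarrow> u \<in> V \<and> v \<in> V"
  and edge_sym: "E u v \<Longrightarrow> E v u"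
  and edge_irrefl: "\<not> E u u"
  using graph unfolding is_graph_def by blast+

lemma finite_type_card_pos: "i \<in> {1..t} \<Longrightarrow> finite (P i) \<and> 1 \<le> card (P i)"
  using partition graph unfolding type_partition_def is_graph_def
  by (metis One_nat_def Suc_leI card_gt_0_iff finite_subset)

definition type_of :: "'a \<Rightarrow> nat" where
  "type_of v = (THE i. i \<in> {1..t} \<and> v \<in> P i)"

lemma type_of_eq: "i \<in> {1..t} \<Longrightarrow> v \<in> P i \<Longrightarrow> type_of v = i"
  unfolding type_of_def using partition unfolding type_partition_def by (rule_tac the_equality) blast+

lemma type_of_mem: "v \<in> V \<Longrightarrow> type_of v \<in> {1..t} \<and> v \<in> P (type_of v)"
  using partition type_of_eq unfolding type_partition_def by blast

lemma edge_if_type_of_eq: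
  assumes "u \<in> V" "v \<in> V" "type_of u = type_of v" "E u w" "w \<noteq> v"
  shows "E v w"
proof -
  have "same_type E u v"
    using partition type_of_mem assms(1-3) unfolding type_partition_def by metis
  then show ?thesis using same_type_edge assms(4,5) edge_irrefl by metis
qed

lemma adjT_if_edge:
  assumes "E u v" "type_of u \<noteq> type_of v"
  shows "adjT E P (type_of u) (type_of v)"
  unfolding adjT_def
proof (intro conjI ballI)
  show "type_of u \<noteq> type_of v" by fact
  fix u' v' assume u': "u' \<in> P (type_of u)" and v': "v' \<in> P (type_of v)"
  have "u \<in> V" "v \<in> V" using edge_in_V assms(1) by auto
  then have types: "type_of u \<in> {1..t}" "type_of v \<in> {1..t}" using type_of_mem by blast+
  have "u' \<in> V" "v' \<in> V" using u' v' types partition unfolding type_partition_def by blast+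
  have "type_of u' = type_of u" "type_of v' = type_of v" using u' v' types type_of_eq by blast+
  then have "E u' v"
    using edge_if_type_of_eq assms \<open>u \<in> V\<close> \<open>u' \<in> V\<close> by metis
  then show "E u' v'"
    using edge_if_type_of_eq edge_sym assms(2) \<open>v \<in> V\<close> \<open>v' \<in> V\<close> \<open>type_of u' = type_of u\<close>
      \<open>type_of v' = type_of v\<close> by metis
qed

lemma clique_type_or_indep_type:
  assumes i: "i \<in> {1..t}"
  shows "clique_type E P i \<or> indep_type E P i"
proof (rule disjCI)
  assume "\<not> indep_type E P i"
  then obtain x y where xy: "x \<in> P i" "y \<in> P i" "E x y" unfolding indep_type_def by blast
  have in_V: "P i \<subseteq> V" using i partition unfolding type_partition_def by blast
  have type_i: "type_of z = i" if "z \<in> P i" for z using type_of_eq i that .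
  have edge_x: "E z x" if "z \<in> P i" "z \<noteq> x" for z
    using edge_if_type_of_eq[of y z x] xy that in_V type_i edge_sym by blast
  show "clique_type E P i"
    unfolding clique_type_def
  proof (intro ballI impI)
    fix u v assume "u \<in> P i" "v \<in> P i" "u \<noteq> v"
    then show "E u v"
      using edge_x edge_if_type_of_eq[of x v u] xy in_V type_i edge_sym by (metis subsetD)
  qed
qed

lemma clique_type_if_edge:
  assumes "E u v" "type_of u = type_of v"
  shows "clique_type E P (type_of u)"
  using clique_type_or_indep_type type_of_mem edge_in_V assms unfolding indep_type_def by metis

lemma indep_type_if_non_edge:
  assumes "u \<in> V" "v \<in> V" "u \<noteq> v" "\<not> E u v" "type_of u = type_of v"
  shows "indep_type E P (type_of u)"
  using clique_type_or_indep_type type_of_mem assms unfolding clique_type_def by metis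

lemma path_types_distinct:
  assumes path: "E a b" "E b c" "E c d" "a \<noteq> c" "b \<noteq> d"
    and non_edges: "\<not> E a c" "\<not> E b d"
  shows "type_of a \<noteq> type_of b" "type_of b \<noteq> type_of c"
    "type_of c \<noteq> type_of d" "type_of a \<noteq> type_of d"
proof -
  have V: "a \<in> V" "b \<in> V" "c \<in> V" "d \<in> V" using edge_in_V path(1,3) by blast+
  show "type_of a \<noteq> type_of b"
    using edge_if_type_of_eq[OF V(2,1) _ path(2)] path(4) non_edges(1) by metis
  show "type_of b \<noteq> type_of c"
    using edge_if_type_of_eq[OF V(2,3) _ edge_sym[OF path(1)]] path(4) non_edges(1) edge_sym by metis
  show "type_of c \<noteq> type_of d"
    using edge_if_type_of_eq[OF V(3,4) _ edge_sym[OF path(2)]] path(5) non_edges(2) edge_sym by metis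
  show "type_of a \<noteq> type_of d"
    using edge_if_type_of_eq[OF V(4,1) _ edge_sym[OF path(3)]] path(4) non_edges(1) by metis
qed

end

locale ILP_solution = type_partitioned_graph +
  fixes k :: nat and n :: "nat set \<Rightarrow> int"
  assumes feasible: "ILP_feasible V E k t P n"
begin

lemmas constraints = feasible[unfolded ILP_feasible_def]
lemmas C0 = constraints[THEN conjunct1, rule_format]
  and C1 = constraints[THEN conjunct2, THEN conjunct1]
  and C2 = constraints[THEN conjunct2, THEN conjunct2, THEN conjunct1, rule_format]
  and C3 = constraints[THEN conjunct2, THEN conjunct2, THEN conjunct2, THEN conjunct1, rule_format]
  and C4 = constraints[THEN conjunct2, THEN conjunct2, THEN conjunct2, THEN conjunct2,
    THEN conjunct1, rule_format]
  and C5 = constraints[THEN conjunct2, THEN conjunct2, THEN conjunct2, THEN conjunct2,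
    THEN conjunct2, THEN conjunct1, rule_format]
  and C6 = constraints[THEN conjunct2, THEN conjunct2, THEN conjunct2, THEN conjunct2,
    THEN conjunct2, THEN conjunct2, THEN conjunct1, rule_format]
  and C7 = constraints[THEN conjunct2, THEN conjunct2, THEN conjunct2, THEN conjunct2,
    THEN conjunct2, THEN conjunct2, THEN conjunct2, rule_format]

definition palette :: "(nat set \<times> nat) set" where
  "palette = (SIGMA A:Pow {1..t}. {0..<nat (n A)})"

definition type_palette :: "nat \<Rightarrow> (nat set \<times> nat) set" where
  "type_palette i = {x \<in> palette. i \<in> fst x}"

lemma finite_palette: "finite palette"
  unfolding palette_def by auto

lemma card_palette: "card palette \<le> k"
proof -
  have "int (card palette) = (\<Sum>A\<in>Pow {1..t}. int (nat (n A)))"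
    unfolding palette_def by simp
  also have "\<dots> = (\<Sum>A\<in>Pow {1..t}. n A)"
    using C7 by (intro sum.cong) auto
  finally show ?thesis using C1 by linarith
qed

lemma finite_sets_containing: "finite {A. A \<subseteq> {1..t} \<and> S \<subseteq> A}"
  by (rule finite_subset[of _ "Pow {1..t}"]) auto

lemma card_type_palette: "int (card (type_palette i)) = sumC t n {i}"
proof -
  have "type_palette i = (SIGMA A:{A. A \<subseteq> {1..t} \<and> {i} \<subseteq> A}. {0..<nat (n A)})"
    unfolding type_palette_def palette_def by auto
  then have "int (card (type_palette i)) = (\<Sum>A | A \<subseteq> {1..t} \<and> {i} \<subseteq> A. int (nat (n A)))"
    using finite_sets_containing by simp
  also have "\<dots> = sumC t n {i}"
    unfolding sumC_def using C7 by (intro sum.cong) auto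
  finally show ?thesis .
qed

lemma card_type_palette_bounds:
  assumes "i \<in> {1..t}"
  shows "1 \<le> card (type_palette i) \<and> card (type_palette i) \<le> card (P i)"
proof -
  have "1 \<le> sumC t n {i} \<and> sumC t n {i} \<le> int (card (P i))"
    using clique_type_or_indep_type[OF assms]
  proof
    assume "clique_type E P i"
    then show ?thesis using C2[OF assms] finite_type_card_pos[OF assms] by simp
  next
    assume "indep_type E P i"
    then show ?thesis using C3[OF assms] by auto
  qed
  then show ?thesis using card_type_palette[of i] by linarith
qed

lemma type_palettes_meet:
  assumes "x \<in> type_palette i" "x \<in> type_palette j"
  shows "1 \<le> sumC t n {i, j}" "\<not> adjT E P i j"
proof -
  obtain A m where A: "x = (A, m)" "A \<subseteq> {1..t}" "i \<in> A" "j \<in> A" "1 \<le> n A"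
    using assms unfolding type_palette_def palette_def by auto
  have "n A \<le> sumC t n {i, j}"
    unfolding sumC_def using A C7 finite_sets_containing by (intro member_le_sum) auto
  then show "1 \<le> sumC t n {i, j}" using A by linarith
  show "\<not> adjT E P i j"
  proof
    assume "adjT E P i j"
    then have "n A = 0" using C0[OF A(2)] A(3,4) by blast
    then show False using A(5) by simp
  qed
qed

end

locale palette_colouring = ILP_solution +
  fixes col :: "'a \<Rightarrow> nat set \<times> nat"
  assumes col_type_palette: "v \<in> V \<Longrightarrow> col v \<in> type_palette (type_of v)"
    and col_repeat: "u \<in> V \<Longrightarrow> v \<in> V \<Longrightarrow> u \<noteq> v \<Longrightarrow> type_of u = type_of v \<Longrightarrow> col u = col v \<Longrightarrow>
      sumC t n {type_of u} < int (card (P (type_of u)))"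

lemma (in ILP_solution) ex_palette_colouring: "\<exists>col. palette_colouring V E t P k n col"
proof -
  have "\<exists>g. g ` P i = type_palette i" if i: "i \<in> {1..t}" for i
  proof (rule ex_onto_if_card_le)
    show "finite (type_palette i)" using finite_palette unfolding type_palette_def by simp
    then show "type_palette i \<noteq> {}" using card_type_palette_bounds[OF i] by auto
    show "card (type_palette i) \<le> card (P i)" using card_type_palette_bounds[OF i] by blast
  qed
  then obtain g where g: "\<And>i. i \<in> {1..t} \<Longrightarrow> g i ` P i = type_palette i" by metis
  define col where "col v = g (type_of v) v" for v
  have "palette_colouring V E t P k n col"
  proof unfold_locales
    show "col v \<in> type_palette (type_of v)" if "v \<in> V" for v
      using g type_of_mem[OF that] unfolding col_def by blast
    fix u v
    assume uv: "u \<in> V" "v \<in> V" "u \<noteq> v" "type_of u = type_of v" "col u = col v"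
    define i where "i = type_of u"
    have i: "i \<in> {1..t}" "u \<in> P i" "v \<in> P i" using type_of_mem uv unfolding i_def by metis+
    have "\<not> inj_on (g i) (P i)" using i uv unfolding col_def i_def inj_on_def by metis
    then have "card (type_palette i) \<noteq> card (P i)"
      using eq_card_imp_inj_on finite_type_card_pos[OF i(1)] g[OF i(1)] by metis
    then show "sumC t n {type_of u} < int (card (P (type_of u)))"
      using card_type_palette_bounds[OF i(1)] card_type_palette[of i] unfolding i_def by linarith
  qed
  then show ?thesis by blast
qed

context palette_colouring
begin

lemma col_palette: "col ` V \<subseteq> palette"
  using col_type_palette unfolding type_palette_def by blast

lemma same_colour:
  assumes "u \<in> V" "v \<in> V" "col u = col v"
  shows "1 \<le> sumC t n {type_of u, type_of v}" "\<not> adjT E P (type_of u) (type_of v)"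
  using type_palettes_meet col_type_palette assms by metis+

lemma col_proper:
  assumes "E u v"
  shows "col u \<noteq> col v"
proof
  assume same: "col u = col v"
  have uv: "u \<in> V" "v \<in> V" "u \<noteq> v" using edge_in_V edge_irrefl assms by blast+
  show False
  proof (cases "type_of u = type_of v")
    case True
    then show False
      using C2 clique_type_if_edge[OF assms] col_repeat[OF uv True same] type_of_mem[OF uv(1)] by simp
  next
    case False
    then show False using adjT_if_edge[OF assms] same_colour[OF uv(1,2) same] by blast
  qed
qed

lemma short_type_if_repeat:
  assumes "u \<in> V" "v \<in> V" "u \<noteq> v" "\<not> E u v" "type_of u = type_of v" "col u = col v"
  shows "indep_type E P (type_of u)" "sumC t n {type_of u} < int (card (P (type_of u)))"
  using indep_type_if_non_edge col_repeat assms by blast+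

lemma no_bicoloured_P4:
  assumes path: "distinct [a, b, c, d]" "E a b" "E b c" "E c d"
    and bicoloured: "col a = col c" "col b = col d"
  shows False
proof -
  have V: "a \<in> V" "b \<in> V" "c \<in> V" "d \<in> V" using edge_in_V path(2,4) by blast+
  have T: "type_of a \<in> {1..t}" "type_of b \<in> {1..t}" "type_of c \<in> {1..t}" "type_of d \<in> {1..t}"
    using type_of_mem V by blast+
  have "a \<noteq> c" "b \<noteq> d" using path(1) by auto
  have non_edges: "\<not> E a c" "\<not> E b d" using col_proper bicoloured by blast+
  note distinct_types = path_types_distinct[OF path(2-4) \<open>a \<noteq> c\<close> \<open>b \<noteq> d\<close> non_edges]
  have adj: "adjT E P (type_of b) (type_of a)" "adjT E P (type_of b) (type_of c)"
    "adjT E P (type_of c) (type_of d)"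
    using adjT_if_edge[OF edge_sym[OF path(2)]] adjT_if_edge[OF path(3)] adjT_if_edge[OF path(4)]
      distinct_types by simp_all
  have shared: "1 \<le> sumC t n {type_of a, type_of c}" "1 \<le> sumC t n {type_of b, type_of d}"
    using same_colour V bicoloured by blast+
  consider (both) "type_of a = type_of c" "type_of b = type_of d"
    | (ac) "type_of a = type_of c" "type_of b \<noteq> type_of d"
    | (bd) "type_of a \<noteq> type_of c" "type_of b = type_of d"
    | (neither) "type_of a \<noteq> type_of c" "type_of b \<noteq> type_of d"
    by blast
  then show False
  proof cases
    case both
    note a_short = short_type_if_repeat[OF V(1,3) \<open>a \<noteq> c\<close> non_edges(1) both(1) bicoloured(1)]
    note b_short = short_type_if_repeat[OF V(2,4) \<open>b \<noteq> d\<close> non_edges(2) both(2) bicoloured(2)]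
    show False using C6[OF T(1,2) distinct_types(1) a_short(1) b_short(1) adj(1) a_short(2)] b_short(2)
      by simp
  next
    case ac
    note a_short = short_type_if_repeat[OF V(1,3) \<open>a \<noteq> c\<close> non_edges(1) ac(1) bicoloured(1)]
    have "adjT E P (type_of a) (type_of b)" "adjT E P (type_of a) (type_of d)"
      using adjT_if_edge[OF path(2)] adjT_if_edge[OF path(4)] distinct_types ac(1) by simp_all
    then show False
      using C5[OF T(1,2,4) _ a_short(1) _ _ a_short(2)] distinct_types ac(2) shared(2) by simp
  next
    case bd
    note b_short = short_type_if_repeat[OF V(2,4) \<open>b \<noteq> d\<close> non_edges(2) bd(2) bicoloured(2)]
    show False
      using C5[OF T(2,1,3) _ b_short(1) adj(1,2) b_short(2)] distinct_types bd(1) shared(1) by simp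
  next
    case neither
    then show False using C4[OF T _ adj] distinct_types shared(1,2) by simp
  qed
qed

end

theorem lemma1:
  fixes V :: "'a set" and E :: "'a \<Rightarrow> 'a \<Rightarrow> bool" and k t :: nat
    and P :: "nat \<Rightarrow> 'a set"
  assumes "is_graph V E"
    and "k \<ge> 1"
    and "type_partition V E t P"
    and "\<exists>n. ILP_feasible V E k t P n"
  shows "\<exists>f. star_coloring V E k f"
proof -
  obtain n where "ILP_feasible V E k t P n" using assms(4) by blast
  then interpret ILP_solution V E t P k n
    using assms(1,3) by unfold_locales
  obtain col where "palette_colouring V E t P k n col" using ex_palette_colouring by blast
  then interpret palette_colouring V E t P k n col .
  show ?thesis
    by (rule star_coloring_from_palette[OF assms(1) finite_palette card_palette col_palette
          col_proper no_bicoloured_P4])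
qed

end
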